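(* Let $\beta>0$ and let $F$ be a fixed labelled graph on $v$ vertices. Then there exists $C>0$ such that the following holds for $1\leq t\leq 2^n$. If $V$ is a set of $n$ vertices, ${\mathcal F}_1,\dots,{\mathcal F}_t$ are families of labelled $v$-element subsets of $V$ with $|{\mathcal F}_i|\geq\beta n^v$ for each $i$, and $p=p(n)$ is such that $\Phi_F\geq Cn$, then asymptotically almost surely, for each $i\in[t]$ there is an embedding of $F$ in $G(n,p)$ on $V$ onto a set in ${\mathcal F}_i$ which respects the labellings.
   Context: $G(n,p)$ is the binomial random graph on $V$. For a graph $F$, $\Phi_F=\Phi_F(n,p):=\min\{n^{v_H}p^{e_H}:H\subseteq F,\ e_H>0\}$, where $v_H,e_H$ are the numbers of vertices and edges of $H$. An embedding respects labellings if the $j$-th vertex of $F$ is mapped to the $j$-th vertex of the labelled set. Asymptotically almost surely means with probability tending to $1$ as $n\to\infty$. *)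

theory Defs
  imports "HOL-Probability.Probability"
begin

definition pairs_of :: "'a set \<Rightarrow> 'a set set" where
  "pairs_of V = {e. e \<subseteq> V \<and> card e = 2}"

text \<open>Binomial random graph G(n,p) on V = {0..<n}: each pair is an edge independently
  with probability p. A graph is represented by its edge set.\<close>
definition gnp :: "nat \<Rightarrow> real \<Rightarrow> nat set set pmf" where
  "gnp n p = map_pmf (\<lambda>f. {e \<in> pairs_of {0..<n}. f e})
                     (Pi_pmf (pairs_of {0..<n}) False (\<lambda>_. bernoulli_pmf p))"

definition labelled_graph :: "nat \<Rightarrow> nat set set \<Rightarrow> bool" where
  "labelled_graph v EF \<longleftrightarrow> EF \<subseteq> pairs_of {0..<v}"

text \<open>Phi_F(n,p) = min over subgraphs H of F with e_H > 0 of n^(v_H) p^(e_H)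
  (infinite if F has no edges).\<close>
definition Phi :: "nat \<Rightarrow> nat set set \<Rightarrow> nat \<Rightarrow> real \<Rightarrow> ereal" where
  "Phi v EF n p = Inf {ereal (real n ^ card W * p ^ card D) | W D.
        W \<subseteq> {0..<v} \<and> D \<subseteq> EF \<and> (\<forall>e\<in>D. e \<subseteq> W) \<and> card D > 0}"

text \<open>Labelled v-element subsets of V: sequences of v distinct elements of V
  (the j-th element is the j-th labelled vertex).\<close>
definition labelled_subsets :: "'a set \<Rightarrow> nat \<Rightarrow> 'a list set" where
  "labelled_subsets V v = {xs. length xs = v \<and> distinct xs \<and> set xs \<subseteq> V}"

definition embeds_onto :: "nat set set \<Rightarrow> 'a list \<Rightarrow> 'a set set \<Rightarrow> bool" where
  "embeds_onto EF xs G \<longleftrightarrow> (\<forall>e\<in>EF. (\<lambda>j. xs ! j) ` e \<in> G)"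

end

theory Submission
  imports Defs
begin

text \<open>Fix one family and, for each labelled set \<open>xs\<close> in it, consider the event that the copy
  of \<open>F\<close> on \<open>xs\<close> is present. Let \<open>e\<close> be the number of edges of \<open>F\<close>. With \<open>H = F\<close>, the
  assumption \<open>\<Phi>\<^sub>F \<ge> C n\<close> gives \<open>n^v p^e \<ge> C n\<close>, so the expected number of copies is
  \<open>\<mu> \<ge> \<beta> n^v p^e \<ge> \<beta> C n\<close>. For the pair sum \<open>\<Delta>\<close> of Janson's inequality, group two
  overlapping copies by the nonempty set \<open>D\<close> of edges of \<open>F\<close> that they share. Given the first
  copy, the second one is fixed up to \<open>v^w n^(v-w)\<close> choices, where \<open>w\<close> is the number of
  vertices spanned by \<open>D\<close>; their union has at least \<open>2e - |D|\<close> edges; and \<open>n^w p^|D| \<ge> C n\<close>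
  by the assumption on \<open>\<Phi>\<^sub>F\<close>. Hence \<open>\<Delta> \<le> 2^e v^v (n^v p^e)^2 / (C n)\<close>, and for large \<open>C\<close>
  the extended Janson inequality \<open>P(no copy) \<le> exp (- min (\<mu>/2) (\<mu>^2/(4 \<Delta>)))\<close> bounds the
  failure probability by \<open>exp (-2 n)\<close>. A union bound over at most \<open>2^n\<close> families leaves
  \<open>(2 exp (-2))^n \<longlonglongrightarrow> 0\<close>.

  Janson's inequality itself follows by induction from Harris' inequality, and its extended
  form by applying it to a random subfamily.\<close>

section \<open>Binomial random subsets\<close>

definition subset_weight :: "'a set \<Rightarrow> real \<Rightarrow> 'a set \<Rightarrow> real" where
  "subset_weight E p S = p ^ card S * (1 - p) ^ card (E - S)"

text \<open>\<open>rprob E p Q\<close> is the probability that the binomial random subset of \<open>E\<close> (each element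
  present independently with probability \<open>p\<close>) satisfies \<open>Q\<close>; as an explicit finite sum it can be
  manipulated by induction on \<open>E\<close>.\<close>

definition rprob :: "'a set \<Rightarrow> real \<Rightarrow> ('a set \<Rightarrow> bool) \<Rightarrow> real" where
  "rprob E p Q = (\<Sum>S\<in>Pow E. if Q S then subset_weight E p S else 0)"

lemma subset_weight_nonneg: "0 \<le> p \<Longrightarrow> p \<le> 1 \<Longrightarrow> 0 \<le> subset_weight E p S"
  by (simp add: subset_weight_def)

lemma rprob_cong: "(\<And>S. S \<subseteq> E \<Longrightarrow> Q S \<longleftrightarrow> R S) \<Longrightarrow> rprob E p Q = rprob E p R"
  unfolding rprob_def by (intro sum.cong) auto

lemma rprob_nonneg: "0 \<le> p \<Longrightarrow> p \<le> 1 \<Longrightarrow> 0 \<le> rprob E p Q"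
  unfolding rprob_def by (intro sum_nonneg) (auto simp: subset_weight_nonneg)

lemma rprob_mono:
  "0 \<le> p \<Longrightarrow> p \<le> 1 \<Longrightarrow> (\<And>S. S \<subseteq> E \<Longrightarrow> Q S \<Longrightarrow> R S) \<Longrightarrow> rprob E p Q \<le> rprob E p R"
  unfolding rprob_def by (intro sum_mono) (auto simp: subset_weight_nonneg)

lemma rprob_split: "rprob E p Q = rprob E p (\<lambda>S. Q S \<and> R S) + rprob E p (\<lambda>S. Q S \<and> \<not> R S)"
  unfolding rprob_def sum.distrib[symmetric] by (intro sum.cong) auto

lemma rprob_disj_le:
  "0 \<le> p \<Longrightarrow> p \<le> 1 \<Longrightarrow> rprob E p (\<lambda>S. Q S \<or> R S) \<le> rprob E p Q + rprob E p R"
  unfolding rprob_def sum.distrib[symmetric] by (intro sum_mono) (auto simp: subset_weight_nonneg)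

lemma rprob_union_bound:
  assumes "finite J" "0 \<le> p" "p \<le> 1"
  shows "rprob E p (\<lambda>S. \<exists>j\<in>J. Q j S) \<le> (\<Sum>j\<in>J. rprob E p (Q j))"
  using assms(1)
proof (induction J rule: finite_induct)
  case empty
  then show ?case by (simp add: rprob_def)
next
  case (insert j J)
  have "rprob E p (\<lambda>S. \<exists>i\<in>insert j J. Q i S) \<le> rprob E p (Q j) + rprob E p (\<lambda>S. \<exists>i\<in>J. Q i S)"
    using rprob_disj_le[OF assms(2,3)] by simp
  with insert show ?case by simp
qed

lemma rprob_empty: "rprob {} p Q = (if Q {} then 1 else 0)"
  by (simp add: rprob_def subset_weight_def)

lemma rprob_insert:
  assumes "finite E" "x \<notin> E"
  shows "rprob (insert x E) p Q = p * rprob E p (\<lambda>S. Q (insert x S)) + (1 - p) * rprob E p Q"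
proof -
  have weight_without_x: "subset_weight (insert x E) p S = (1 - p) * subset_weight E p S"
    if "S \<subseteq> E" for S
  proof -
    have "insert x E - S = insert x (E - S)" using that assms by auto
    then show ?thesis using that assms by (simp add: subset_weight_def finite_subset)
  qed
  have weight_with_x: "subset_weight (insert x E) p (insert x S) = p * subset_weight E p S"
    if "S \<subseteq> E" for S
  proof -
    have "insert x E - insert x S = E - S" "x \<notin> S" using that assms by auto
    then show ?thesis using that assms by (simp add: subset_weight_def finite_subset)
  qed
  have "rprob (insert x E) p Q
      = (\<Sum>S\<in>Pow E. if Q S then subset_weight (insert x E) p S else 0)
      + (\<Sum>S\<in>insert x ` Pow E. if Q S then subset_weight (insert x E) p S else 0)"
    unfolding rprob_def Pow_insert using assms by (intro sum.union_disjoint) auto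
  also have "(\<Sum>S\<in>insert x ` Pow E. if Q S then subset_weight (insert x E) p S else 0)
      = (\<Sum>S\<in>Pow E. if Q (insert x S) then subset_weight (insert x E) p (insert x S) else 0)"
    using assms(2) by (subst sum.reindex) (auto simp: inj_on_def)
  also have "\<dots> = p * rprob E p (\<lambda>S. Q (insert x S))"
    unfolding rprob_def sum_distrib_left by (intro sum.cong) (auto simp: weight_with_x)
  also have "(\<Sum>S\<in>Pow E. if Q S then subset_weight (insert x E) p S else 0) = (1 - p) * rprob E p Q"
    unfolding rprob_def sum_distrib_left by (intro sum.cong) (auto simp: weight_without_x)
  finally show ?thesis by simp
qed

lemma rprob_True: "finite E \<Longrightarrow> rprob E p (\<lambda>_. True) = 1"
  by (induction E rule: finite_induct) (simp_all add: rprob_empty rprob_insert algebra_simps)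

lemma rprob_not: "finite E \<Longrightarrow> rprob E p (\<lambda>S. \<not> Q S) = 1 - rprob E p Q"
  using rprob_split[of E p "\<lambda>_. True" Q] rprob_True[of E p] by simp

lemma rprob_product:
  assumes "finite X" "finite Y" "X \<inter> Y = {}"
  shows "rprob (X \<union> Y) p (\<lambda>S. Q (S \<inter> X) \<and> R (S \<inter> Y)) = rprob X p Q * rprob Y p R"
  using assms
proof (induction X arbitrary: Q rule: finite_induct)
  case empty
  have "rprob ({} \<union> Y) p (\<lambda>S. Q (S \<inter> {}) \<and> R (S \<inter> Y)) = (if Q {} then rprob Y p R else 0)"
    unfolding rprob_def by (auto intro!: sum.cong simp: Int_absorb2)
  then show ?case by (simp add: rprob_empty)
next
  case (insert x X)
  have x: "x \<notin> X \<union> Y" using insert by auto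
  have "rprob (insert x X \<union> Y) p (\<lambda>S. Q (S \<inter> insert x X) \<and> R (S \<inter> Y))
     = p * rprob (X \<union> Y) p (\<lambda>S. Q (insert x S \<inter> insert x X) \<and> R (insert x S \<inter> Y))
       + (1 - p) * rprob (X \<union> Y) p (\<lambda>S. Q (S \<inter> insert x X) \<and> R (S \<inter> Y))"
    using rprob_insert[OF _ x] insert by simp
  also have "\<dots> = p * rprob (X \<union> Y) p (\<lambda>S. Q (insert x (S \<inter> X)) \<and> R (S \<inter> Y))
       + (1 - p) * rprob (X \<union> Y) p (\<lambda>S. Q (S \<inter> X) \<and> R (S \<inter> Y))"
    using x by (intro arg_cong2[where f = "(+)"] arg_cong2[where f = "(*)"] refl rprob_cong)
      (auto simp: Int_insert_right)
  also have "\<dots> = (p * rprob X p (\<lambda>T. Q (insert x T)) + (1 - p) * rprob X p Q) * rprob Y p R"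
    using insert.IH[of "\<lambda>T. Q (insert x T)"] insert.IH[of Q] insert.prems
    by (simp add: algebra_simps)
  also have "\<dots> = rprob (insert x X) p Q * rprob Y p R"
    using insert by (simp add: rprob_insert)
  finally show ?case .
qed

lemma rprob_full: "finite K \<Longrightarrow> rprob K p (\<lambda>T. K \<subseteq> T) = p ^ card K"
proof -
  assume "finite K"
  have "rprob K p (\<lambda>T. K \<subseteq> T) = (\<Sum>S\<in>Pow K. if S = K then subset_weight K p S else 0)"
    unfolding rprob_def by (intro sum.cong) auto
  with \<open>finite K\<close> show ?thesis by (simp add: subset_weight_def)
qed

lemma rprob_superset_indep:
  assumes "finite E" "K \<subseteq> E" and R: "\<And>S. S \<subseteq> E \<Longrightarrow> R S \<longleftrightarrow> R (S - K)"
  shows "rprob E p (\<lambda>S. K \<subseteq> S \<and> R S) = p ^ card K * rprob E p R"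
proof -
  have fin: "finite K" "finite (E - K)" using assms finite_subset by auto
  have split: "rprob E p (\<lambda>S. Q (S \<inter> K) \<and> R S) = rprob K p Q * rprob (E - K) p R" for Q
  proof -
    have "R S \<longleftrightarrow> R (S \<inter> (E - K))" if "S \<subseteq> E" for S
    proof -
      have "S \<inter> (E - K) = S - K" using that by auto
      with R[OF that] show ?thesis by simp
    qed
    moreover have "K \<union> (E - K) = E" using assms(2) by auto
    ultimately have "rprob E p (\<lambda>S. Q (S \<inter> K) \<and> R S)
        = rprob (K \<union> (E - K)) p (\<lambda>S. Q (S \<inter> K) \<and> R (S \<inter> (E - K)))"
      by (auto intro: rprob_cong)
    also have "\<dots> = rprob K p Q * rprob (E - K) p R"
      using fin by (intro rprob_product) auto
    finally show ?thesis .
  qed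
  have "rprob E p (\<lambda>S. K \<subseteq> S \<and> R S) = rprob K p (\<lambda>T. K \<subseteq> T) * rprob (E - K) p R"
    using split[of "\<lambda>T. K \<subseteq> T"] by simp
  moreover have "rprob E p R = rprob (E - K) p R"
    using split[of "\<lambda>_. True"] fin by (simp add: rprob_True)
  ultimately show ?thesis using fin by (simp add: rprob_full)
qed

lemma rprob_superset: "finite E \<Longrightarrow> K \<subseteq> E \<Longrightarrow> rprob E p (\<lambda>S. K \<subseteq> S) = p ^ card K"
  using rprob_superset_indep[of E K "\<lambda>_. True" p] by (simp add: rprob_True)

lemma harris_inequality:
  assumes "finite E" "0 \<le> p" "p \<le> 1"
    and "\<And>S T. S \<subseteq> T \<Longrightarrow> T \<subseteq> E \<Longrightarrow> Q S \<Longrightarrow> Q T"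
    and "\<And>S T. S \<subseteq> T \<Longrightarrow> T \<subseteq> E \<Longrightarrow> R T \<Longrightarrow> R S"
  shows "rprob E p (\<lambda>S. Q S \<and> R S) \<le> rprob E p Q * rprob E p R"
  using assms(1,4,5)
proof (induction E arbitrary: Q R rule: finite_induct)
  case empty
  then show ?case by (simp add: rprob_empty)
next
  case (insert x E)
  define Q1 Q0 R1 R0
    where "Q1 = rprob E p (\<lambda>S. Q (insert x S))" and "Q0 = rprob E p Q"
      and "R1 = rprob E p (\<lambda>S. R (insert x S))" and "R0 = rprob E p R"
  have with_x: "rprob E p (\<lambda>S. Q (insert x S) \<and> R (insert x S)) \<le> Q1 * R1"
    unfolding Q1_def R1_def
  proof (rule insert.IH)
    fix S T assume "S \<subseteq> T" "T \<subseteq> E"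
    then have "insert x S \<subseteq> insert x T" "insert x T \<subseteq> insert x E" by auto
    then show "Q (insert x S) \<Longrightarrow> Q (insert x T)" "R (insert x T) \<Longrightarrow> R (insert x S)"
      using insert.prems by blast+
  qed
  have without_x: "rprob E p (\<lambda>S. Q S \<and> R S) \<le> Q0 * R0"
    unfolding Q0_def R0_def
  proof (rule insert.IH)
    fix S T assume "S \<subseteq> T" "T \<subseteq> E"
    then have "T \<subseteq> insert x E" by auto
    then show "Q S \<Longrightarrow> Q T" "R T \<Longrightarrow> R S"
      using insert.prems \<open>S \<subseteq> T\<close> by blast+
  qed
  have "Q0 \<le> Q1"
    unfolding Q0_def Q1_def using assms(2,3)
    by (rule rprob_mono) (use insert.prems(1)[of _ "insert x _"] in auto)
  have "R1 \<le> R0"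
    unfolding R0_def R1_def using assms(2,3)
    by (rule rprob_mono) (use insert.prems(2)[of _ "insert x _"] in auto)
  have "rprob (insert x E) p (\<lambda>S. Q S \<and> R S)
      = p * rprob E p (\<lambda>S. Q (insert x S) \<and> R (insert x S)) + (1 - p) * rprob E p (\<lambda>S. Q S \<and> R S)"
    using insert by (simp add: rprob_insert)
  also have "\<dots> \<le> p * (Q1 * R1) + (1 - p) * (Q0 * R0)"
    using with_x without_x assms(2,3) by (intro add_mono mult_left_mono) auto
  also have "\<dots> = (p * Q1 + (1 - p) * Q0) * (p * R1 + (1 - p) * R0) - p * (1 - p) * ((Q1 - Q0) * (R0 - R1))"
    by (simp add: algebra_simps)
  also have "\<dots> \<le> (p * Q1 + (1 - p) * Q0) * (p * R1 + (1 - p) * R0)"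
    using \<open>Q0 \<le> Q1\<close> \<open>R1 \<le> R0\<close> assms(2,3) by simp
  also have "\<dots> = rprob (insert x E) p Q * rprob (insert x E) p R"
    using insert by (simp add: rprob_insert Q1_def Q0_def R1_def R0_def)
  finally show ?case .
qed

section \<open>Janson's inequality\<close>

definition janson_mu :: "real \<Rightarrow> ('i \<Rightarrow> 'e set) \<Rightarrow> 'i set \<Rightarrow> real" where
  "janson_mu p A I = (\<Sum>i\<in>I. p ^ card (A i))"

text \<open>The sum runs over ordered pairs, so this is twice the \<open>\<Delta>\<close> of texts summing over
  unordered pairs.\<close>

definition janson_delta :: "real \<Rightarrow> ('i \<Rightarrow> 'e set) \<Rightarrow> 'i set \<Rightarrow> real" where
  "janson_delta p A I =
     (\<Sum>k\<in>I. \<Sum>j\<in>I. if k \<noteq> j \<and> A k \<inter> A j \<noteq> {} then p ^ card (A k \<union> A j) else 0)"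

lemma rprob_overlapping_le:
  assumes E: "finite E" and p: "0 \<le> p" "p \<le> 1" and "finite I" "A i \<subseteq> E" "\<forall>j\<in>I. A j \<subseteq> E"
  shows "rprob E p (\<lambda>S. A i \<subseteq> S \<and> (\<exists>j\<in>I. A i \<inter> A j \<noteq> {} \<and> A j \<subseteq> S))
    \<le> (\<Sum>j\<in>I. if A i \<inter> A j \<noteq> {} then p ^ card (A i \<union> A j) else 0)"
proof -
  define J where "J = {j \<in> I. A i \<inter> A j \<noteq> {}}"
  have "rprob E p (\<lambda>S. A i \<subseteq> S \<and> (\<exists>j\<in>I. A i \<inter> A j \<noteq> {} \<and> A j \<subseteq> S))
      \<le> rprob E p (\<lambda>S. \<exists>j\<in>J. A i \<union> A j \<subseteq> S)"
    using p by (rule rprob_mono) (auto simp: J_def)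
  also have "\<dots> \<le> (\<Sum>j\<in>J. rprob E p (\<lambda>S. A i \<union> A j \<subseteq> S))"
    using \<open>finite I\<close> p by (intro rprob_union_bound) (auto simp: J_def)
  also have "\<dots> = (\<Sum>j\<in>J. p ^ card (A i \<union> A j))"
    using assms by (intro sum.cong refl rprob_superset) (auto simp: J_def)
  also have "\<dots> = (\<Sum>j\<in>I. if A i \<inter> A j \<noteq> {} then p ^ card (A i \<union> A j) else 0)"
    unfolding J_def using \<open>finite I\<close> by (simp add: sum.inter_filter)
  finally show ?thesis .
qed

text \<open>Split the sets \<open>A j\<close> by whether they meet \<open>A i\<close>: the disjoint ones give a decreasing
  event independent of \<open>A i \<subseteq> S\<close>, the others an increasing one, and Harris' inequality
  decouples the two.\<close>

lemma janson_step:
  assumes E: "finite E" and p: "0 \<le> p" "p \<le> 1" and "finite I" "A i \<subseteq> E" "\<forall>j\<in>I. A j \<subseteq> E"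
  defines "D \<equiv> \<lambda>S. \<forall>j\<in>I. \<not> A j \<subseteq> S"
    and "\<sigma> \<equiv> \<Sum>j\<in>I. if A i \<inter> A j \<noteq> {} then p ^ card (A i \<union> A j) else 0"
  shows "(p ^ card (A i) - \<sigma>) * rprob E p D \<le> rprob E p (\<lambda>S. A i \<subseteq> S \<and> D S)"
proof -
  define B where "B = (\<lambda>S. \<exists>j\<in>I. A i \<inter> A j \<noteq> {} \<and> A j \<subseteq> S)"
  define C where "C = (\<lambda>S. \<forall>j\<in>I. A i \<inter> A j = {} \<longrightarrow> \<not> A j \<subseteq> S)"
  have indep: "rprob E p (\<lambda>S. A i \<subseteq> S \<and> C S) = p ^ card (A i) * rprob E p C"
    using assms by (intro rprob_superset_indep) (auto simp: C_def)
  have split: "rprob E p (\<lambda>S. A i \<subseteq> S \<and> C S)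
      = rprob E p (\<lambda>S. (A i \<subseteq> S \<and> B S) \<and> C S) + rprob E p (\<lambda>S. A i \<subseteq> S \<and> D S)"
    by (subst rprob_split[where R = B])
      (auto simp: B_def C_def D_def intro!: arg_cong2[where f = "(+)"] rprob_cong)
  have harris: "rprob E p (\<lambda>S. (A i \<subseteq> S \<and> B S) \<and> C S) \<le> rprob E p (\<lambda>S. A i \<subseteq> S \<and> B S) * rprob E p C"
    using E p by (rule harris_inequality) (unfold B_def C_def, blast+)
  have overlap: "rprob E p (\<lambda>S. A i \<subseteq> S \<and> B S) \<le> \<sigma>"
    unfolding B_def \<sigma>_def using assms by (intro rprob_overlapping_le)
  have on_C: "(p ^ card (A i) - \<sigma>) * rprob E p C \<le> rprob E p (\<lambda>S. A i \<subseteq> S \<and> D S)"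
    using indep split harris mult_right_mono[OF overlap rprob_nonneg[OF p, of E C]]
    by (simp add: algebra_simps)
  have D_le_C: "rprob E p D \<le> rprob E p C"
    using p by (rule rprob_mono) (auto simp: C_def D_def)
  show ?thesis
  proof (cases "\<sigma> \<le> p ^ card (A i)")
    case True
    then have "(p ^ card (A i) - \<sigma>) * rprob E p D \<le> (p ^ card (A i) - \<sigma>) * rprob E p C"
      using D_le_C by (intro mult_left_mono) auto
    with on_C show ?thesis by linarith
  next
    case False
    then have "(p ^ card (A i) - \<sigma>) * rprob E p D \<le> 0"
      using rprob_nonneg[OF p] by (intro mult_nonpos_nonneg) auto
    with rprob_nonneg[OF p] show ?thesis by (meson order_trans)
  qed
qed

lemma janson_delta_insert_ge:
  assumes "finite I" "i \<notin> I" "0 \<le> p"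
  shows "janson_delta p A I + (\<Sum>j\<in>I. if A i \<inter> A j \<noteq> {} then p ^ card (A i \<union> A j) else 0)
    \<le> janson_delta p A (insert i I)"
proof -
  define f where "f k j = (if k \<noteq> j \<and> A k \<inter> A j \<noteq> {} then p ^ card (A k \<union> A j) else 0)" for k j
  have "(\<Sum>j\<in>I. if A i \<inter> A j \<noteq> {} then p ^ card (A i \<union> A j) else 0) = (\<Sum>j\<in>I. f i j)"
    using assms(2) by (intro sum.cong) (auto simp: f_def)
  moreover have "0 \<le> (\<Sum>k\<in>I. f k i)"
    using assms(3) by (intro sum_nonneg) (simp add: f_def)
  moreover have "janson_delta p A (insert i I)
      = (\<Sum>j\<in>I. f i j) + ((\<Sum>k\<in>I. f k i) + janson_delta p A I)"
    using assms(1,2) by (simp add: janson_delta_def f_def[symmetric] sum.distrib, simp add: f_def)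
  ultimately show ?thesis by linarith
qed

theorem janson_inequality:
  assumes E: "finite E" and p: "0 \<le> p" "p \<le> 1" and "finite I" "\<forall>i\<in>I. A i \<subseteq> E"
  shows "rprob E p (\<lambda>S. \<forall>i\<in>I. \<not> A i \<subseteq> S) \<le> exp (janson_delta p A I - janson_mu p A I)"
  using assms(4,5)
proof (induction I rule: finite_induct)
  case empty
  then show ?case by (simp add: rprob_True E janson_mu_def janson_delta_def)
next
  case (insert i I)
  define D where "D = (\<lambda>S. \<forall>j\<in>I. \<not> A j \<subseteq> S)"
  define \<sigma> where "\<sigma> = (\<Sum>j\<in>I. if A i \<inter> A j \<noteq> {} then p ^ card (A i \<union> A j) else 0)"
  have "rprob E p (\<lambda>S. \<forall>j\<in>insert i I. \<not> A j \<subseteq> S) = rprob E p D - rprob E p (\<lambda>S. D S \<and> A i \<subseteq> S)"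
    using rprob_split[of E p D "\<lambda>S. A i \<subseteq> S"] by (simp add: D_def conj_commute)
  also have "\<dots> \<le> rprob E p D * (1 + (\<sigma> - p ^ card (A i)))"
    using janson_step[OF E p insert(1), of A i] insert.prems
    unfolding D_def \<sigma>_def by (simp add: algebra_simps conj_commute)
  also have "\<dots> \<le> rprob E p D * exp (\<sigma> - p ^ card (A i))"
    using rprob_nonneg[OF p] by (intro mult_left_mono) (auto simp: exp_ge_add_one_self)
  also have "\<dots> \<le> exp (janson_delta p A I - janson_mu p A I) * exp (\<sigma> - p ^ card (A i))"
    using insert by (intro mult_right_mono) (auto simp: D_def)
  also have "\<dots> \<le> exp (janson_delta p A (insert i I) - janson_mu p A (insert i I))"
    using janson_delta_insert_ge[OF insert(1,2) p(1), of A] insert(1,2)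
    by (simp add: exp_add[symmetric] janson_mu_def \<sigma>_def)
  finally show ?case .
qed

lemma sum_eq_sum_indicator:
  "finite I \<Longrightarrow> J \<subseteq> I \<Longrightarrow> sum g J = (\<Sum>i\<in>I. if i \<in> J then g i else 0)"
  using sum.inter_restrict[of I g J] by (simp add: Int_absorb1)

lemma expectation_random_subset_sum:
  assumes "finite I"
  shows "(\<Sum>J\<in>Pow I. subset_weight I q J * (\<Sum>i\<in>J. a i)) = q * (\<Sum>i\<in>I. a i)"
proof -
  have "(\<Sum>J\<in>Pow I. subset_weight I q J * (\<Sum>i\<in>J. a i))
      = (\<Sum>J\<in>Pow I. \<Sum>i\<in>I. a i * (if {i} \<subseteq> J then subset_weight I q J else 0))"
  proof (intro sum.cong refl)
    fix J assume "J \<in> Pow I"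
    then have J: "J \<subseteq> I" by simp
    show "subset_weight I q J * (\<Sum>i\<in>J. a i)
        = (\<Sum>i\<in>I. a i * (if {i} \<subseteq> J then subset_weight I q J else 0))"
      using assms by (simp only: sum_eq_sum_indicator[OF assms(1) J])
        (auto simp: sum_distrib_left intro!: sum.cong)
  qed
  also have "\<dots> = (\<Sum>i\<in>I. a i * rprob I q (\<lambda>J. {i} \<subseteq> J))"
    unfolding rprob_def sum_distrib_left by (rule sum.swap)
  also have "\<dots> = (\<Sum>i\<in>I. a i * q)"
    using rprob_superset[OF assms, of "{_}" q] by (intro sum.cong refl) simp
  finally show ?thesis by (simp add: sum_distrib_left mult.commute)
qed

lemma expectation_random_subset_double_sum:
  assumes "finite I" and "\<And>i. f i i = 0"
  shows "(\<Sum>J\<in>Pow I. subset_weight I q J * (\<Sum>k\<in>J. \<Sum>j\<in>J. f k j)) = q^2 * (\<Sum>k\<in>I. \<Sum>j\<in>I. f k j)"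
proof -
  have "(\<Sum>J\<in>Pow I. subset_weight I q J * (\<Sum>k\<in>J. \<Sum>j\<in>J. f k j))
      = (\<Sum>J\<in>Pow I. \<Sum>k\<in>I. \<Sum>j\<in>I. f k j * (if {k, j} \<subseteq> J then subset_weight I q J else 0))"
  proof (intro sum.cong refl)
    fix J assume "J \<in> Pow I"
    then have J: "J \<subseteq> I" by simp
    show "subset_weight I q J * (\<Sum>k\<in>J. \<Sum>j\<in>J. f k j)
        = (\<Sum>k\<in>I. \<Sum>j\<in>I. f k j * (if {k, j} \<subseteq> J then subset_weight I q J else 0))"
      using assms by (simp only: sum_eq_sum_indicator[OF assms(1) J])
        (auto simp: sum_distrib_left intro!: sum.cong)
  qed
  also have "\<dots> = (\<Sum>k\<in>I. \<Sum>j\<in>I. f k j * rprob I q (\<lambda>J. {k, j} \<subseteq> J))"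
    unfolding rprob_def sum_distrib_left by (subst sum.swap, rule sum.cong[OF refl], rule sum.swap)
  also have "\<dots> = (\<Sum>k\<in>I. \<Sum>j\<in>I. q^2 * f k j)"
  proof (intro sum.cong refl)
    fix k j assume "k \<in> I" "j \<in> I"
    then show "f k j * rprob I q (\<lambda>J. {k, j} \<subseteq> J) = q^2 * f k j"
      using rprob_superset[OF assms(1), of "{k, j}" q] assms(2)
      by (cases "k = j") (simp_all add: power2_eq_square)
  qed
  finally show ?thesis by (simp add: sum_distrib_left)
qed

lemma exists_ge_expectation:
  assumes "finite I" "0 \<le> q" "q \<le> 1"
  obtains J where "J \<subseteq> I" "(\<Sum>J'\<in>Pow I. subset_weight I q J' * g J') \<le> g J"
proof -
  have "Max (g ` Pow I) \<in> g ` Pow I"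
    using assms(1) by (intro Max_in) auto
  then obtain J where J: "J \<subseteq> I" "g J = Max (g ` Pow I)" by auto
  have "(\<Sum>J'\<in>Pow I. subset_weight I q J' * g J') \<le> (\<Sum>J'\<in>Pow I. subset_weight I q J' * g J)"
    using assms J by (intro sum_mono mult_left_mono) (auto simp: subset_weight_nonneg)
  also have "\<dots> = g J * rprob I q (\<lambda>_. True)"
    by (simp add: rprob_def sum_distrib_left mult.commute)
  finally show ?thesis
    using that J(1) assms(1) by (simp add: rprob_True)
qed

text \<open>Janson's inequality applied to a \<open>q\<close>-random subfamily, chosen so that its
  \<open>\<mu> - \<Delta>\<close> is at least the average.\<close>

lemma janson_inequality_thinned:
  assumes E: "finite E" and p: "0 \<le> p" "p \<le> 1" and I: "finite I" "\<forall>i\<in>I. A i \<subseteq> E"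
    and q: "0 \<le> q" "q \<le> 1"
  shows "rprob E p (\<lambda>S. \<forall>i\<in>I. \<not> A i \<subseteq> S) \<le> exp (q^2 * janson_delta p A I - q * janson_mu p A I)"
proof -
  define g where "g J = janson_mu p A J - janson_delta p A J" for J
  have "(\<Sum>J\<in>Pow I. subset_weight I q J * g J) = q * janson_mu p A I - q^2 * janson_delta p A I"
    unfolding g_def janson_mu_def janson_delta_def right_diff_distrib sum_subtractf
    using I by (simp add: expectation_random_subset_sum expectation_random_subset_double_sum)
  then obtain J where J: "J \<subseteq> I" "q * janson_mu p A I - q^2 * janson_delta p A I \<le> g J"
    using exists_ge_expectation[OF I(1) q] by metis
  have "rprob E p (\<lambda>S. \<forall>i\<in>I. \<not> A i \<subseteq> S) \<le> rprob E p (\<lambda>S. \<forall>i\<in>J. \<not> A i \<subseteq> S)"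
    using p J(1) by (intro rprob_mono) auto
  also have "\<dots> \<le> exp (- g J)"
    unfolding g_def using E p J(1) I by (intro janson_inequality[THEN order_trans]) (auto intro: finite_subset)
  also have "\<dots> \<le> exp (q^2 * janson_delta p A I - q * janson_mu p A I)"
    using J(2) by simp
  finally show ?thesis .
qed

corollary janson_inequality_extended:
  assumes E: "finite E" and p: "0 \<le> p" "p \<le> 1" and I: "finite I" "\<forall>i\<in>I. A i \<subseteq> E"
    and c: "c \<le> janson_mu p A I / 2" "4 * c * janson_delta p A I \<le> (janson_mu p A I)^2"
  shows "rprob E p (\<lambda>S. \<forall>i\<in>I. \<not> A i \<subseteq> S) \<le> exp (- c)"
proof -
  define \<mu> \<Delta> where "\<mu> = janson_mu p A I" and "\<Delta> = janson_delta p A I"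
  have "0 \<le> \<mu>" unfolding \<mu>_def janson_mu_def using p by (intro sum_nonneg) auto
  show ?thesis
  proof (cases "\<Delta> \<le> \<mu> / 2")
    case True
    have "rprob E p (\<lambda>S. \<forall>i\<in>I. \<not> A i \<subseteq> S) \<le> exp (1^2 * \<Delta> - 1 * \<mu>)"
      unfolding \<mu>_def \<Delta>_def using E p I by (intro janson_inequality_thinned) auto
    also have "\<dots> \<le> exp (- c)" using True c by (simp add: \<mu>_def \<Delta>_def)
    finally show ?thesis .
  next
    case False
    define q where "q = \<mu> / (2 * \<Delta>)"
    have "0 < \<Delta>" using False \<open>0 \<le> \<mu>\<close> by linarith
    have "0 \<le> q" "q \<le> 1" using \<open>0 < \<Delta>\<close> \<open>0 \<le> \<mu>\<close> False by (auto simp: q_def field_simps)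
    have "rprob E p (\<lambda>S. \<forall>i\<in>I. \<not> A i \<subseteq> S) \<le> exp (q^2 * \<Delta> - q * \<mu>)"
      unfolding \<mu>_def \<Delta>_def using E p I \<open>0 \<le> q\<close> \<open>q \<le> 1\<close> by (rule janson_inequality_thinned)
    also have "q^2 * \<Delta> - q * \<mu> = - (\<mu>^2 / (4 * \<Delta>))"
      using \<open>0 < \<Delta>\<close> by (simp add: q_def field_simps power2_eq_square)
    also have "exp (- (\<mu>^2 / (4 * \<Delta>))) \<le> exp (- c)"
      using c(2) \<open>0 < \<Delta>\<close> by (simp add: \<mu>_def \<Delta>_def field_simps mult.commute)
    finally show ?thesis .
  qed
qed

section \<open>Copies of a labelled graph in \<open>G(n,p)\<close>\<close>

lemma pmf_random_subset:
  assumes E: "finite E" and p: "0 \<le> p" "p \<le> 1"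
  shows "pmf (map_pmf (\<lambda>f. {e \<in> E. f e}) (Pi_pmf E False (\<lambda>_. bernoulli_pmf p))) S
    = (if S \<subseteq> E then subset_weight E p S else 0)"
proof -
  define M where "M = Pi_pmf E False (\<lambda>_. bernoulli_pmf p)"
  have "pmf (map_pmf (\<lambda>f. {e \<in> E. f e}) M) S = measure_pmf.prob M {f. {e \<in> E. f e} = S}"
    by (simp add: pmf_map vimage_def)
  also have "\<dots> = (if S \<subseteq> E then subset_weight E p S else 0)"
  proof (cases "S \<subseteq> E")
    case True
    have "measure_pmf.prob M {f. {e \<in> E. f e} = S} = measure_pmf.prob M {\<lambda>e. e \<in> S}"
    proof (rule measure_prob_cong_0)
      fix f assume "f \<in> {f. {e \<in> E. f e} = S} - {\<lambda>e. e \<in> S}"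
      then have "\<exists>x. x \<notin> E \<and> f x" using True by auto
      then show "pmf M f = 0" unfolding M_def using E by (auto simp: pmf_Pi)
    qed (use True in auto)
    also have "\<dots> = (\<Prod>e\<in>E. pmf (bernoulli_pmf p) (e \<in> S))"
      unfolding M_def using E True by (auto simp: measure_pmf_single pmf_Pi)
    also have "\<dots> = (\<Prod>e\<in>E. if e \<in> S then p else 1 - p)"
      using p by (intro prod.cong) auto
    also have "\<dots> = subset_weight E p S"
      using E True by (simp add: prod.If_cases subset_weight_def Int_absorb1 Diff_eq)
    finally show ?thesis using True by simp
  next
    case False
    then have "{f. {e \<in> E. f e} = S} = {}" by auto
    with False show ?thesis by simp
  qed
  finally show ?thesis unfolding M_def .
qed

lemma prob_random_subset:
  assumes E: "finite E" and p: "0 \<le> p" "p \<le> 1"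
  shows "measure_pmf.prob (map_pmf (\<lambda>f. {e \<in> E. f e}) (Pi_pmf E False (\<lambda>_. bernoulli_pmf p))) {S. Q S}
    = rprob E p Q"
proof -
  let ?M = "map_pmf (\<lambda>f. {e \<in> E. f e}) (Pi_pmf E False (\<lambda>_. bernoulli_pmf p))"
  have "measure_pmf.prob ?M {S. Q S} = measure_pmf.prob ?M (Pow E \<inter> {S. Q S})"
    by (rule measure_prob_cong_0) (auto simp: pmf_random_subset[OF assms])
  also have "\<dots> = (\<Sum>S\<in>Pow E \<inter> {S. Q S}. pmf ?M S)"
    using E by (intro measure_measure_pmf_finite) auto
  also have "\<dots> = rprob E p Q"
    using E by (simp add: sum.inter_restrict pmf_random_subset[OF assms] rprob_def)
  finally show ?thesis .
qed

lemma finite_pairs_of: "finite V \<Longrightarrow> finite (pairs_of V)"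
  unfolding pairs_of_def by (rule finite_subset[of _ "Pow V"]) auto

lemma prob_gnp:
  "0 \<le> p \<Longrightarrow> p \<le> 1 \<Longrightarrow> measure_pmf.prob (gnp n p) {G. Q G} = rprob (pairs_of {0..<n}) p Q"
  unfolding gnp_def by (intro prob_random_subset finite_pairs_of) auto

definition copy_edges :: "nat set set \<Rightarrow> 'a list \<Rightarrow> 'a set set" where
  "copy_edges EF xs = (\<lambda>e. (!) xs ` e) ` EF"

definition shared_edges :: "nat set set \<Rightarrow> 'a list \<Rightarrow> 'a list \<Rightarrow> nat set set" where
  "shared_edges EF xs ys = {f \<in> EF. (!) ys ` f \<in> copy_edges EF xs}"

lemma embeds_onto_iff_copy_edges: "embeds_onto EF xs G \<longleftrightarrow> copy_edges EF xs \<subseteq> G"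
  unfolding embeds_onto_def copy_edges_def by auto

lemma labelled_subsetsD:
  assumes "xs \<in> labelled_subsets V v"
  shows "length xs = v" "distinct xs" "set xs \<subseteq> V" "inj_on ((!) xs) {0..<v}"
  using assms by (auto simp: labelled_subsets_def intro!: inj_on_nth)

lemma finite_labelled_subsets: "finite V \<Longrightarrow> finite (labelled_subsets V v)"
  unfolding labelled_subsets_def
  by (rule finite_subset[OF _ finite_lists_length_eq[of V v]]) auto

lemma card_labelled_subsets_le: "finite V \<Longrightarrow> card (labelled_subsets V v) \<le> card V ^ v"
  unfolding labelled_subsets_def
  by (rule order_trans[OF card_mono[OF finite_lists_length_eq]]) (auto simp: card_lists_length_eq)

lemma labelled_graphD: "labelled_graph v EF \<Longrightarrow> e \<in> EF \<Longrightarrow> e \<subseteq> {0..<v} \<and> card e = 2"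
  by (auto simp: labelled_graph_def pairs_of_def)

lemma finite_labelled_graph: "labelled_graph v EF \<Longrightarrow> finite EF"
  unfolding labelled_graph_def by (rule finite_subset) (auto intro: finite_pairs_of)

lemma card_copy_edges:
  assumes "labelled_graph v EF" "xs \<in> labelled_subsets V v"
  shows "card (copy_edges EF xs) = card EF"
  unfolding copy_edges_def
proof (rule card_image, rule inj_onI)
  fix e f assume "e \<in> EF" "f \<in> EF" "(!) xs ` e = (!) xs ` f"
  then show "e = f"
    using inj_on_image_eq_iff[OF labelled_subsetsD(4)[OF assms(2)]] labelled_graphD[OF assms(1)]
    by blast
qed

lemma copy_edges_subset_pairs_of:
  assumes "labelled_graph v EF" "xs \<in> labelled_subsets V v"
  shows "copy_edges EF xs \<subseteq> pairs_of V"
proof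
  fix y assume "y \<in> copy_edges EF xs"
  then obtain e where e: "e \<in> EF" "y = (!) xs ` e" by (auto simp: copy_edges_def)
  with assms(1) have "e \<subseteq> {0..<v}" "card e = 2" by (auto dest: labelled_graphD)
  moreover from this have "inj_on ((!) xs) e"
    using labelled_subsetsD(4)[OF assms(2)] inj_on_subset by blast
  moreover have "xs ! j \<in> V" if "j < v" for j
    using labelled_subsetsD(1,3)[OF assms(2)] that nth_mem by blast
  ultimately show "y \<in> pairs_of V"
    using e by (auto simp: pairs_of_def card_image)
qed

lemma card_lists_nth_in_le:
  assumes "\<And>j. finite (S j)"
  shows "card {ys. length ys = v \<and> (\<forall>j<v. ys ! j \<in> S j)} \<le> (\<Prod>j<v. card (S j))"
proof -
  have "{ys. length ys = v \<and> (\<forall>j<v. ys ! j \<in> S j)} \<subseteq> (\<lambda>f. map f [0..<v]) ` PiE {..<v} S"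
  proof
    fix ys assume ys: "ys \<in> {ys. length ys = v \<and> (\<forall>j<v. ys ! j \<in> S j)}"
    then have "ys = map (restrict ((!) ys) {..<v}) [0..<v]"
      by (intro nth_equalityI) auto
    moreover have "restrict ((!) ys) {..<v} \<in> PiE {..<v} S" using ys by auto
    ultimately show "ys \<in> (\<lambda>f. map f [0..<v]) ` PiE {..<v} S" by blast
  qed
  moreover have "finite (PiE {..<v} S)" using assms by (intro finite_PiE) auto
  ultimately have "card {ys. length ys = v \<and> (\<forall>j<v. ys ! j \<in> S j)} \<le> card (PiE {..<v} S)"
    by (meson card_image_le card_mono finite_imageI order_trans)
  then show ?thesis by (simp add: card_PiE)
qed

lemma shared_edges_nonempty:
  assumes "copy_edges EF xs \<inter> copy_edges EF ys \<noteq> {}"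
  shows "shared_edges EF xs ys \<noteq> {}"
proof -
  from assms obtain f where "f \<in> EF" "(!) ys ` f \<in> copy_edges EF xs"
    unfolding copy_edges_def by blast
  then show ?thesis by (auto simp: shared_edges_def)
qed

lemma card_Un_copy_edges_ge:
  assumes LG: "labelled_graph v EF" and "xs \<in> labelled_subsets V v" "ys \<in> labelled_subsets V v"
  shows "2 * card EF - card (shared_edges EF xs ys) \<le> card (copy_edges EF xs \<union> copy_edges EF ys)"
proof -
  have fin: "finite (shared_edges EF xs ys)"
    using finite_labelled_graph[OF LG] by (simp add: shared_edges_def)
  have "copy_edges EF xs \<inter> copy_edges EF ys \<subseteq> (\<lambda>f. (!) ys ` f) ` shared_edges EF xs ys"
    unfolding shared_edges_def copy_edges_def by blast
  then have "card (copy_edges EF xs \<inter> copy_edges EF ys) \<le> card (shared_edges EF xs ys)"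
    using fin by (meson card_image_le card_mono finite_imageI order_trans)
  moreover have "card (copy_edges EF xs) + card (copy_edges EF ys)
      = card (copy_edges EF xs \<union> copy_edges EF ys) + card (copy_edges EF xs \<inter> copy_edges EF ys)"
    using finite_labelled_graph[OF LG] by (intro card_Un_Int) (simp_all add: copy_edges_def)
  moreover have "card (copy_edges EF xs) = card EF" "card (copy_edges EF ys) = card EF"
    using card_copy_edges[OF LG] assms(2,3) by blast+
  ultimately show ?thesis by linarith
qed

lemma nth_mem_set_if_shared:
  assumes LG: "labelled_graph v EF" and xs: "xs \<in> labelled_subsets V v"
    and "f \<in> shared_edges EF xs ys" "j \<in> f"
  shows "ys ! j \<in> set xs"
proof -
  from assms(3) obtain f' where "f' \<in> EF" "(!) ys ` f = (!) xs ` f'"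
    by (auto simp: shared_edges_def copy_edges_def)
  moreover have "f' \<subseteq> {0..<v}" using \<open>f' \<in> EF\<close> labelled_graphD[OF LG] by blast
  ultimately have "ys ! j \<in> (!) xs ` {0..<v}" using \<open>j \<in> f\<close> by blast
  then show ?thesis using labelled_subsetsD(1)[OF xs] by auto
qed

lemma card_labelled_subsets_sharing_le:
  assumes LG: "labelled_graph v EF" and V: "finite V" and xs: "xs \<in> labelled_subsets V v"
    and D: "D \<subseteq> EF"
  shows "card {ys \<in> labelled_subsets V v. D \<subseteq> shared_edges EF xs ys}
    \<le> v ^ card (\<Union>D) * card V ^ (v - card (\<Union>D))"
proof -
  define W where "W = \<Union>D"
  define S where "S j = (if j \<in> W then set xs else V)" for j
  have W: "W \<subseteq> {0..<v}" using D labelled_graphD[OF LG] by (auto simp: W_def)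
  have "ys ! j \<in> S j"
    if ys: "ys \<in> labelled_subsets V v" "D \<subseteq> shared_edges EF xs ys" and "j < v" for ys j
  proof (cases "j \<in> W")
    case True
    with ys(2) show ?thesis
      using nth_mem_set_if_shared[OF LG xs] by (auto simp: S_def W_def)
  next
    case False
    then show ?thesis using labelled_subsetsD(1,3)[OF ys(1)] \<open>j < v\<close> nth_mem by (auto simp: S_def)
  qed
  then have "{ys \<in> labelled_subsets V v. D \<subseteq> shared_edges EF xs ys}
      \<subseteq> {ys. length ys = v \<and> (\<forall>j<v. ys ! j \<in> S j)}"
    by (auto dest: labelled_subsetsD(1))
  moreover have "finite {ys. length ys = v \<and> (\<forall>j<v. ys ! j \<in> S j)}"
  proof (rule finite_subset[OF _ finite_lists_length_eq[of "V \<union> set xs" v]])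
    have "S j \<subseteq> V \<union> set xs" for j by (simp add: S_def)
    then show "{ys. length ys = v \<and> (\<forall>j<v. ys ! j \<in> S j)} \<subseteq> {ys. set ys \<subseteq> V \<union> set xs \<and> length ys = v}"
      by (fastforce simp: in_set_conv_nth)
  qed (use V in simp)
  ultimately have "card {ys \<in> labelled_subsets V v. D \<subseteq> shared_edges EF xs ys} \<le> (\<Prod>j<v. card (S j))"
    using V by (intro order_trans[OF card_mono card_lists_nth_in_le]) (auto simp: S_def)
  also have "(\<Prod>j<v. card (S j)) = (\<Prod>j<v. if j \<in> W then v else card V)"
    using distinct_card[OF labelled_subsetsD(2)[OF xs]] labelled_subsetsD(1)[OF xs]
    by (intro prod.cong) (auto simp: S_def)
  also have "\<dots> = v ^ card W * card V ^ (v - card W)"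
  proof -
    have "{0..<v} \<inter> W = W" "{0..<v} \<inter> - W = {0..<v} - W" using W by auto
    with W show ?thesis
      by (simp add: prod.If_cases lessThan_atLeast0 card_Diff_subset finite_subset)
  qed
  finally show ?thesis unfolding W_def .
qed

lemma Phi_le:
  assumes "W \<subseteq> {0..<v}" "D \<subseteq> EF" "\<forall>e\<in>D. e \<subseteq> W" "card D > 0"
  shows "Phi v EF n p \<le> ereal (real n ^ card W * p ^ card D)"
  unfolding Phi_def by (rule Inf_lower) (use assms in blast)

text \<open>The shared edges \<open>D\<close> form a subgraph of \<open>F\<close> on \<open>w\<close> vertices, so \<open>C n \<le> n^w p^|D|\<close>
  compensates for the \<open>n^(v-w)\<close> free choices of the second copy.\<close>

lemma sharing_term_le:
  fixes p C :: real
  assumes LG: "labelled_graph v EF" and p: "0 \<le> p" "p \<le> 1" and C: "0 \<le> C"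
    and xs: "xs \<in> labelled_subsets {0..<n} v" and D: "D \<subseteq> EF" "D \<noteq> {}"
    and Phi: "ereal (C * real n) \<le> Phi v EF n p"
  shows "p ^ (2 * card EF - card D) * card {ys \<in> labelled_subsets {0..<n} v. D \<subseteq> shared_edges EF xs ys}
      * (C * real n) * real n ^ v \<le> real v ^ v * (real n ^ v * p ^ card EF)^2"
proof -
  define w d e where "w = card (\<Union>D)" and "d = card D" and "e = card EF"
  have W: "\<Union>D \<subseteq> {0..<v}" using D labelled_graphD[OF LG] by auto
  then have "w \<le> v" unfolding w_def using card_mono[OF _ W] by simp
  have fin: "finite EF" using LG by (rule finite_labelled_graph)
  then have "d \<le> e" unfolding d_def e_def using D by (intro card_mono)
  have "0 < d" unfolding d_def using D fin by (auto simp: card_gt_0_iff intro: finite_subset)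
  have "Phi v EF n p \<le> ereal (real n ^ w * p ^ d)"
    unfolding w_def d_def using W D(1) \<open>0 < d\<close>[unfolded d_def] by (intro Phi_le) auto
  with Phi have "ereal (C * real n) \<le> ereal (real n ^ w * p ^ d)" by (rule order_trans)
  then have Cn: "C * real n \<le> real n ^ w * p ^ d" by simp
  have count: "real (card {ys \<in> labelled_subsets {0..<n} v. D \<subseteq> shared_edges EF xs ys})
      \<le> real v ^ w * real n ^ (v - w)"
    using card_labelled_subsets_sharing_le[OF LG _ xs D(1)] unfolding w_def
    by (simp flip: of_nat_power of_nat_mult)
  have "p ^ (2 * e - d) * card {ys \<in> labelled_subsets {0..<n} v. D \<subseteq> shared_edges EF xs ys}
      * (C * real n) \<le> p ^ (2 * e - d) * (real v ^ w * real n ^ (v - w)) * (real n ^ w * p ^ d)"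
    using p C by (intro mult_mono[OF mult_left_mono[OF count] Cn]) auto
  also have "\<dots> = real v ^ w * (p ^ (2 * e - d) * p ^ d) * (real n ^ (v - w) * real n ^ w)"
    by (simp add: algebra_simps)
  also have "\<dots> = real v ^ w * (p ^ e)^2 * real n ^ v"
    using \<open>d \<le> e\<close> \<open>w \<le> v\<close> by (simp flip: power_add power_mult add: mult.commute)
  also have "\<dots> \<le> real v ^ v * (p ^ e)^2 * real n ^ v"
  proof -
    have "real v ^ w \<le> real v ^ v"
      using \<open>w \<le> v\<close> by (cases "v = 0") (auto intro: power_increasing)
    then show ?thesis by (intro mult_right_mono) auto
  qed
  finally have "p ^ (2 * e - d) * card {ys \<in> labelled_subsets {0..<n} v. D \<subseteq> shared_edges EF xs ys}
      * (C * real n) * real n ^ v \<le> real v ^ v * (p ^ e)^2 * real n ^ v * real n ^ v"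
    by (rule mult_right_mono) simp
  then show ?thesis
    unfolding d_def e_def by (simp add: power_mult_distrib power2_eq_square mult_ac)
qed

lemma overlap_weight_le:
  fixes p :: real
  assumes LG: "labelled_graph v EF" and p: "0 \<le> p" "p \<le> 1"
    and xs: "xs \<in> labelled_subsets V v" and ys: "ys \<in> labelled_subsets V v"
    and overlap: "copy_edges EF xs \<inter> copy_edges EF ys \<noteq> {}"
  shows "p ^ card (copy_edges EF xs \<union> copy_edges EF ys)
    \<le> (\<Sum>D\<in>Pow EF - {{}}. if D \<subseteq> shared_edges EF xs ys then p ^ (2 * card EF - card D) else 0)"
proof -
  have "shared_edges EF xs ys \<in> Pow EF - {{}}"
    using shared_edges_nonempty[OF overlap] by (auto simp: shared_edges_def)
  moreover have "finite (Pow EF - {{}})" using finite_labelled_graph[OF LG] by simp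
  ultimately have "p ^ (2 * card EF - card (shared_edges EF xs ys))
      \<le> (\<Sum>D\<in>Pow EF - {{}}. if D \<subseteq> shared_edges EF xs ys then p ^ (2 * card EF - card D) else 0)"
    using p member_le_sum[of "shared_edges EF xs ys" "Pow EF - {{}}"
        "\<lambda>D. if D \<subseteq> shared_edges EF xs ys then p ^ (2 * card EF - card D) else 0"]
    by simp
  moreover have "p ^ card (copy_edges EF xs \<union> copy_edges EF ys) \<le> p ^ (2 * card EF - card (shared_edges EF xs ys))"
    using card_Un_copy_edges_ge[OF LG xs ys] p by (intro power_decreasing) auto
  ultimately show ?thesis by linarith
qed

lemma sum_overlapping_copies_le:
  fixes p C :: real
  assumes LG: "labelled_graph v EF" and p: "0 \<le> p" "p \<le> 1" and C: "0 \<le> C"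
    and xs: "xs \<in> labelled_subsets {0..<n} v" and Fam: "Fam \<subseteq> labelled_subsets {0..<n} v"
    and Phi: "ereal (C * real n) \<le> Phi v EF n p"
  shows "(\<Sum>ys\<in>Fam. if xs \<noteq> ys \<and> copy_edges EF xs \<inter> copy_edges EF ys \<noteq> {}
             then p ^ card (copy_edges EF xs \<union> copy_edges EF ys) else 0) * (C * real n) * real n ^ v
    \<le> 2 ^ card EF * real v ^ v * (real n ^ v * p ^ card EF)^2" (is "?S * _ * _ \<le> _")
proof -
  define L where "L = labelled_subsets {0..<n} v"
  define DD where "DD = Pow EF - {{}}"
  define h where "h D = p ^ (2 * card EF - card D)" for D :: "nat set set"
  define G where "G ys = (\<Sum>D\<in>DD. if D \<subseteq> shared_edges EF xs ys then h D else 0)" for ys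
  have fin: "finite EF" "finite L" "finite DD"
    using finite_labelled_graph[OF LG] finite_labelled_subsets by (auto simp: L_def DD_def)
  have G_nonneg: "0 \<le> G ys" for ys unfolding G_def h_def using p by (intro sum_nonneg) auto
  have "?S \<le> (\<Sum>ys\<in>Fam. G ys)"
    using Fam G_nonneg overlap_weight_le[OF LG p xs]
    unfolding G_def h_def DD_def by (intro sum_mono) auto
  also have "\<dots> \<le> (\<Sum>ys\<in>L. G ys)"
    using Fam fin G_nonneg unfolding L_def by (intro sum_mono2) auto
  also have "\<dots> = (\<Sum>D\<in>DD. h D * card {ys \<in> L. D \<subseteq> shared_edges EF xs ys})"
    unfolding G_def using fin by (subst sum.swap) (simp add: sum.inter_filter[symmetric] mult.commute)
  finally have "?S * (C * real n) * real n ^ v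
      \<le> (\<Sum>D\<in>DD. h D * card {ys \<in> L. D \<subseteq> shared_edges EF xs ys}) * (C * real n) * real n ^ v"
    using C by (intro mult_right_mono) auto
  also have "\<dots> = (\<Sum>D\<in>DD. h D * card {ys \<in> L. D \<subseteq> shared_edges EF xs ys} * (C * real n) * real n ^ v)"
    by (simp add: sum_distrib_right)
  also have "\<dots> \<le> (\<Sum>D\<in>DD. real v ^ v * (real n ^ v * p ^ card EF)^2)"
    unfolding h_def L_def DD_def using LG p C xs Phi by (intro sum_mono sharing_term_le) auto
  also have "\<dots> \<le> 2 ^ card EF * real v ^ v * (real n ^ v * p ^ card EF)^2"
  proof -
    have "card DD \<le> card (Pow EF)"
      using fin by (intro card_mono) (auto simp: DD_def)
    also have "\<dots> = 2 ^ card EF" using fin by (simp add: card_Pow)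
    finally have "real (card DD) \<le> 2 ^ card EF"
      by (metis of_nat_le_iff of_nat_numeral of_nat_power)
    then show ?thesis by (simp add: mult_right_mono mult.assoc)
  qed
  finally show ?thesis .
qed

lemma Phi_le_copy:
  assumes "labelled_graph v EF" "EF \<noteq> {}"
  shows "Phi v EF n p \<le> ereal (real n ^ v * p ^ card EF)"
  using Phi_le[where W = "{0..<v}" and D = EF and n = n and p = p] assms finite_labelled_graph[OF assms(1)]
    labelled_graphD[OF assms(1)]
  by (simp add: card_gt_0_iff)

lemma janson_mu_copy_edges:
  fixes p :: real
  assumes "labelled_graph v EF" "Fam \<subseteq> labelled_subsets V v"
  shows "janson_mu p (copy_edges EF) Fam = card Fam * p ^ card EF"
proof -
  have "janson_mu p (copy_edges EF) Fam = (\<Sum>xs\<in>Fam. p ^ card EF)"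
    unfolding janson_mu_def
  proof (rule sum.cong[OF refl])
    fix xs assume "xs \<in> Fam"
    with assms(2) have "xs \<in> labelled_subsets V v" by blast
    then show "p ^ card (copy_edges EF xs) = p ^ card EF" by (simp add: card_copy_edges[OF assms(1)])
  qed
  then show ?thesis by simp
qed

lemma janson_delta_copy_edges_le:
  fixes p C :: real
  assumes LG: "labelled_graph v EF" and p: "0 \<le> p" "p \<le> 1" and C: "0 \<le> C" and n: "1 \<le> n"
    and Fam: "Fam \<subseteq> labelled_subsets {0..<n} v" and Phi: "ereal (C * real n) \<le> Phi v EF n p"
  shows "janson_delta p (copy_edges EF) Fam * (C * real n)
    \<le> 2 ^ card EF * real v ^ v * (real n ^ v * p ^ card EF)^2"
proof -
  define B where "B = 2 ^ card EF * real v ^ v * (real n ^ v * p ^ card EF)^2"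
  have "janson_delta p (copy_edges EF) Fam * (C * real n) * real n ^ v = (\<Sum>xs\<in>Fam. (\<Sum>ys\<in>Fam.
      if xs \<noteq> ys \<and> copy_edges EF xs \<inter> copy_edges EF ys \<noteq> {}
      then p ^ card (copy_edges EF xs \<union> copy_edges EF ys) else 0) * (C * real n) * real n ^ v)"
    unfolding janson_delta_def by (simp add: sum_distrib_right)
  also have "\<dots> \<le> (\<Sum>xs\<in>Fam. B)"
    unfolding B_def using Fam C Phi by (intro sum_mono sum_overlapping_copies_le[OF LG p]) auto
  also have "\<dots> \<le> real n ^ v * B"
  proof -
    have "card Fam \<le> card (labelled_subsets {0..<n} v)"
      using Fam finite_labelled_subsets by (intro card_mono) auto
    also have "\<dots> \<le> n ^ v" using card_labelled_subsets_le[of "{0..<n}" v] by simp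
    finally have "real (card Fam) \<le> real n ^ v" by (simp flip: of_nat_power)
    then show ?thesis by (simp add: B_def mult_right_mono)
  qed
  finally show ?thesis unfolding B_def using n by (simp add: mult.commute)
qed

text \<open>The constants are chosen so that the extended Janson inequality applies with
  \<open>c = 2 n\<close>: \<open>\<beta> C \<ge> 4\<close> gives \<open>\<mu> \<ge> 4 n\<close>, and \<open>\<beta>\<^sup>2 C \<ge> 8 \<cdot> 2\<^sup>e v\<^sup>v\<close> gives \<open>8 n \<Delta> \<le> \<mu>\<^sup>2\<close>.\<close>

lemma prob_no_copy_le:
  fixes p C \<beta> :: real
  assumes LG: "labelled_graph v EF" and p: "0 \<le> p" "p \<le> 1" and n: "1 \<le> n" and \<beta>: "0 < \<beta>"
    and Fam: "Fam \<subseteq> labelled_subsets {0..<n} v" and card_Fam: "\<beta> * real n ^ v \<le> card Fam"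
    and Phi: "ereal (C * real n) \<le> Phi v EF n p"
    and C: "4 / \<beta> \<le> C" "8 * 2 ^ card EF * real v ^ v / \<beta>^2 \<le> C"
  shows "rprob (pairs_of {0..<n}) p (\<lambda>G. \<not> (\<exists>xs\<in>Fam. embeds_onto EF xs G)) \<le> exp (- (2 * real n))"
proof (cases "EF = {}")
  case True
  have "0 < \<beta> * real n ^ v" using n \<beta> by simp
  with card_Fam have "Fam \<noteq> {}" by auto
  then show ?thesis by (simp add: True embeds_onto_def rprob_def)
next
  case False
  define M \<mu> \<Delta> where "M = real n ^ v * p ^ card EF"
    and "\<mu> = janson_mu p (copy_edges EF) Fam" and "\<Delta> = janson_delta p (copy_edges EF) Fam"
  have "0 < C" using C(1) \<beta> by (meson divide_pos_pos order_less_le_trans zero_less_numeral)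
  have "C * real n \<le> M"
    using order_trans[OF Phi Phi_le_copy[OF LG False]] by (simp add: M_def)
  have "\<beta> * M \<le> \<mu>"
    using card_Fam p janson_mu_copy_edges[OF LG Fam]
    unfolding M_def \<mu>_def by (simp add: mult_right_mono flip: mult.assoc)
  have "4 * real n \<le> \<beta> * C * real n" using C(1) \<beta> by (intro mult_right_mono) (auto simp: field_simps)
  also have "\<dots> \<le> \<beta> * M" using \<open>C * real n \<le> M\<close> \<beta> by (simp add: mult.assoc)
  finally have "4 * real n \<le> \<beta> * M" .
  have "4 * (2 * real n) * \<Delta> * C = 8 * (\<Delta> * (C * real n))" by (simp add: algebra_simps)
  also have "\<dots> \<le> 8 * 2 ^ card EF * real v ^ v * M^2"
    using janson_delta_copy_edges_le[OF LG p _ n Fam Phi] \<open>0 < C\<close> by (simp add: \<Delta>_def M_def)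
  also have "\<dots> \<le> (\<beta> * M)^2 * C"
  proof -
    have "8 * 2 ^ card EF * real v ^ v \<le> C * \<beta>^2" using C(2) \<beta> by (simp add: field_simps)
    then have "8 * 2 ^ card EF * real v ^ v * M^2 \<le> C * \<beta>^2 * M^2" by (rule mult_right_mono) simp
    then show ?thesis by (simp add: power_mult_distrib mult_ac)
  qed
  finally have "4 * (2 * real n) * \<Delta> \<le> (\<beta> * M)^2" using \<open>0 < C\<close> by simp
  also have "\<dots> \<le> \<mu>^2"
    using \<open>\<beta> * M \<le> \<mu>\<close> \<beta> p by (intro power_mono) (auto simp: M_def)
  finally have "4 * (2 * real n) * \<Delta> \<le> \<mu>^2" .
  then have "rprob (pairs_of {0..<n}) p (\<lambda>S. \<forall>xs\<in>Fam. \<not> copy_edges EF xs \<subseteq> S) \<le> exp (- (2 * real n))"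
    using Fam copy_edges_subset_pairs_of[OF LG] finite_subset[OF Fam finite_labelled_subsets]
      \<open>4 * real n \<le> \<beta> * M\<close> \<open>\<beta> * M \<le> \<mu>\<close> p
    unfolding \<mu>_def \<Delta>_def by (intro janson_inequality_extended finite_pairs_of) auto
  then show ?thesis by (simp add: embeds_onto_iff_copy_edges)
qed

lemma prob_every_family_has_copy_ge:
  fixes p C \<beta> :: real and t :: nat and Fam :: "nat \<Rightarrow> nat list set"
  assumes LG: "labelled_graph v EF" and p: "0 \<le> p" "p \<le> 1" and n: "1 \<le> n" and \<beta>: "0 < \<beta>"
    and t: "t \<le> 2 ^ n"
    and Fam: "\<forall>i\<in>{1..t}. Fam i \<subseteq> labelled_subsets {0..<n} v \<and> \<beta> * real n ^ v \<le> card (Fam i)"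
    and Phi: "ereal (C * real n) \<le> Phi v EF n p"
    and C: "4 / \<beta> \<le> C" "8 * 2 ^ card EF * real v ^ v / \<beta>^2 \<le> C"
  shows "1 - (2 * exp (-2)) ^ n
    \<le> measure_pmf.prob (gnp n p) {G. \<forall>i\<in>{1..t}. \<exists>xs\<in>Fam i. embeds_onto EF xs G}"
proof -
  define E where "E = pairs_of {0..<n}"
  have "rprob E p (\<lambda>G. \<exists>i\<in>{1..t}. \<not> (\<exists>xs\<in>Fam i. embeds_onto EF xs G))
      \<le> (\<Sum>i\<in>{1..t}. rprob E p (\<lambda>G. \<not> (\<exists>xs\<in>Fam i. embeds_onto EF xs G)))"
    using p by (intro rprob_union_bound) auto
  also have "\<dots> \<le> (\<Sum>i\<in>{1..t}. exp (- (2 * real n)))"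
    unfolding E_def using assms by (intro sum_mono prob_no_copy_le) auto
  also have "\<dots> = real t * exp (- 2) ^ n"
    by (simp add: exp_of_nat_mult[symmetric] mult.commute)
  also have "\<dots> \<le> (2 * exp (- 2)) ^ n"
  proof -
    have "real t \<le> 2 ^ n" using t by (metis of_nat_le_iff of_nat_numeral of_nat_power)
    then show ?thesis by (simp add: power_mult_distrib mult_right_mono)
  qed
  finally have "rprob E p (\<lambda>G. \<exists>i\<in>{1..t}. \<not> (\<exists>xs\<in>Fam i. embeds_onto EF xs G)) \<le> (2 * exp (-2)) ^ n" .
  moreover have "measure_pmf.prob (gnp n p) {G. \<forall>i\<in>{1..t}. \<exists>xs\<in>Fam i. embeds_onto EF xs G}
      = 1 - rprob E p (\<lambda>G. \<exists>i\<in>{1..t}. \<not> (\<exists>xs\<in>Fam i. embeds_onto EF xs G))"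
    using p rprob_not[of E p "\<lambda>G. \<exists>i\<in>{1..t}. \<not> (\<exists>xs\<in>Fam i. embeds_onto EF xs G)"]
    unfolding E_def by (simp add: prob_gnp finite_pairs_of)
  ultimately show ?thesis by simp
qed

lemma two_exp_minus_two_less_one: "2 * exp (-2 :: real) < 1"
proof -
  have "3 \<le> exp (2 :: real)" using exp_ge_add_one_self[of 2] by simp
  then show ?thesis by (simp add: exp_minus field_simps)
qed

theorem corollary2p9:
  fixes \<beta> :: real and v :: nat and EF :: "nat set set"
  assumes "\<beta> > 0" and "labelled_graph v EF"
  shows "\<exists>C>0. \<forall>(t :: nat \<Rightarrow> nat) (Fam :: nat \<Rightarrow> nat \<Rightarrow> nat list set) (p :: nat \<Rightarrow> real).
     (\<forall>\<^sub>F n in sequentially. 1 \<le> t n \<and> t n \<le> 2 ^ n) \<longrightarrow>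
     (\<forall>\<^sub>F n in sequentially. \<forall>i\<in>{1..t n}.
          Fam n i \<subseteq> labelled_subsets {0..<n} v \<and> real (card (Fam n i)) \<ge> \<beta> * real n ^ v) \<longrightarrow>
     (\<forall>n. 0 \<le> p n \<and> p n \<le> 1) \<longrightarrow>
     (\<forall>\<^sub>F n in sequentially. Phi v EF n (p n) \<ge> ereal (C * real n)) \<longrightarrow>
     ((\<lambda>n. measure_pmf.prob (gnp n (p n))
              {G. \<forall>i\<in>{1..t n}. \<exists>xs\<in>Fam n i. embeds_onto EF xs G}) \<longlonglongrightarrow> 1)"
proof -
  define C where "C = max (4 / \<beta>) (8 * 2 ^ card EF * real v ^ v / \<beta>^2)"
  have C: "0 < C" "4 / \<beta> \<le> C" "8 * 2 ^ card EF * real v ^ v / \<beta>^2 \<le> C"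
    using assms(1) by (auto simp: C_def less_max_iff_disj)
  show ?thesis
  proof (intro exI[of _ C] conjI allI impI, goal_cases)
    case (2 t Fam p)
    let ?P = "\<lambda>n. measure_pmf.prob (gnp n (p n)) {G. \<forall>i\<in>{1..t n}. \<exists>xs\<in>Fam n i. embeds_onto EF xs G}"
    have "\<forall>\<^sub>F n in sequentially. 1 - (2 * exp (-2)) ^ n \<le> ?P n"
      using 2(1,2,4) eventually_ge_at_top[of 1]
    proof eventually_elim
      case (elim n)
      with 2(3) C show ?case
        by (intro prob_every_family_has_copy_ge[OF assms(2) _ _ _ assms(1)]) simp_all
    qed
    moreover have "\<forall>\<^sub>F n in sequentially. ?P n \<le> 1"
      by (simp add: measure_pmf.prob_le_1)
    moreover have "(\<lambda>n. 1 - (2 * exp (-2 :: real)) ^ n) \<longlonglongrightarrow> 1 - 0"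
      using two_exp_minus_two_less_one by (intro tendsto_diff tendsto_const LIMSEQ_power_zero) simp
    ultimately show ?case
      using tendsto_sandwich[of _ ?P sequentially "\<lambda>_. 1" 1] by simp
  qed (fact C)
qed

end
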